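(* Let $l:\mathbb{R}^p\to\mathbb{R}$ be a convex and differentiable function, let $\lambda_1\ge\lambda_2\ge\dots\ge\lambda_p\ge 0$ be arbitrary, and let $$\hat b\in\operatorname{argmin}_{b\in\mathbb{R}^p}\Big\{l(b)+\sum_{i=1}^p\lambda_i|b|_{(i)}\Big\}.$$ Let $U(b)=-\nabla l(b)$ and for $a>0$ let $T(a)=U(\hat b)+a\hat b$. Assume $R:=\#\{i:\hat b_i\neq 0\}=r$. Then for any $a>0$ and every $i$: (1) $\hat b_i\neq 0 \iff |T_i(a)|>\lambda_r$; (2) $\hat b_i\neq 0 \implies |U_i(\hat b)|\ge\lambda_r$. Moreover, if $\lambda_1>\lambda_2>\dots>\lambda_p\ge 0$, then $|U_i(\hat b)|\ge\lambda_r\implies\hat b_i\neq 0$.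
   Context: $|b|_{(1)}\ge\dots\ge|b|_{(p)}$ denote the ordered absolute values of the entries of $b\in\mathbb{R}^p$. *)

theory Defs
  imports "HOL-Analysis.Analysis" "HOL-Library.Multiset"
begin

text \<open>Ordered absolute values |b|_(1) >= ... >= |b|_(p) of a vector b in R^p
  (p = CARD('n)), indexed from 1: ord_abs b k = |b|_(k) for 1 <= k <= p.\<close>
definition ord_abs :: "real ^ 'n::finite \<Rightarrow> nat \<Rightarrow> real" where
  "ord_abs b k = rev (sorted_list_of_multiset (image_mset (\<lambda>i. \<bar>b $ i\<bar>) (mset_set UNIV))) ! (k - 1)"

definition slope_pen :: "(nat \<Rightarrow> real) \<Rightarrow> real ^ 'n::finite \<Rightarrow> real" where
  "slope_pen lam b = (\<Sum>k = 1..CARD('n). lam k * ord_abs b k)"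

end

theory Submission
  imports Defs
begin

(*
  By summation by parts, the SLOPE penalty equals sum_k (lam_k - lam_(k+1)) S_k(b) with
  lam_(p+1) = 0, where S_k(b) is the sum of the k largest |b_j|; all these coefficients are
  nonnegative. Shrinking a nonzero coordinate of bhat by t increases no S_k and lowers S_k by
  exactly t for k >= r, so the penalty drops by at least lam_r t. Moving a zero coordinate to
  +-t, with t below every nonzero |bhat_j|, leaves S_1, ..., S_r unchanged and raises the
  others by at most t, so the penalty grows by at most lam_(r+1) t. Comparing these with the
  first-order expansion of l at the minimiser gives -sgn(bhat_i) g_i >= lam_r on the support
  and |g_i| <= lam_(r+1) <= lam_r off it, which yields all three claims.
*)

definition sum_largest_abs :: "real ^ 'n::finite \<Rightarrow> nat \<Rightarrow> real" where
  "sum_largest_abs b k = (\<Sum>j = 1..k. ord_abs b j)"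

lemma sum_largest_abs_sorted_enumeration:
  fixes b :: "real ^ 'n::finite"
  obtains ys where "distinct ys" "set ys = UNIV" "length ys = CARD('n)"
    "\<And>i j. i \<le> j \<Longrightarrow> j < CARD('n) \<Longrightarrow> \<bar>b $ (ys ! j)\<bar> \<le> \<bar>b $ (ys ! i)\<bar>"
    "\<And>k. k \<le> CARD('n) \<Longrightarrow> sum_largest_abs b k = (\<Sum>j<k. \<bar>b $ (ys ! j)\<bar>)"
proof -
  define f where "f = (\<lambda>i. \<bar>b $ i\<bar>)"
  obtain xs where xs: "set xs = (UNIV :: 'n set)" "distinct xs"
    using finite_distinct_list[of "UNIV :: 'n set"] by auto
  define ys where "ys = rev (sort_key f xs)"
  have "sort (map f xs) = map f (sort_key f xs)"
    by (rule properties_for_sort) (simp_all add: mset_map)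
  then have "sorted_list_of_multiset (image_mset f (mset_set UNIV)) = map f (sort_key f xs)"
    using xs by (metis mset_set_set mset_map sorted_list_of_multiset_mset)
  then have ord_abs_ys: "ord_abs b k = map f ys ! (k - 1)" for k
    unfolding ord_abs_def ys_def f_def[symmetric] by (simp only: rev_map)
  have len: "length ys = CARD('n)" unfolding ys_def using xs distinct_card by fastforce
  have "sorted_wrt (\<ge>) (map f ys)"
    unfolding ys_def rev_map[symmetric] sorted_wrt_rev by simp
  then have "f (ys ! j) \<le> f (ys ! i)" if "i \<le> j" "j < CARD('n)" for i j
    using that len by (cases "i = j") (auto simp: sorted_wrt_iff_nth_less)
  moreover have "sum_largest_abs b k = (\<Sum>j<k. f (ys ! j))" if "k \<le> CARD('n)" for k
    using that len
    by (auto simp: sum_largest_abs_def sum.atLeast1_atMost_eq ord_abs_ys intro!: sum.cong)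
  ultimately show ?thesis
    using that[of ys] xs len by (simp add: ys_def f_def)
qed

lemma antimono_sum_subset_le_prefix:
  fixes x :: "nat \<Rightarrow> real"
  assumes antimono: "\<And>i j. i \<le> j \<Longrightarrow> j < n \<Longrightarrow> x j \<le> x i"
    and P: "P \<subseteq> {..<n}"
  shows "sum x P \<le> sum x {..<card P}"
proof (cases "P = {}")
  case False
  define K where "K = {..<card P}"
  define c where "c = x (card P - 1)"
  have "finite P" using P finite_subset by blast
  then have "card P \<le> n" using card_mono[OF _ P] by simp
  have "card (P - K) = card (K - P)"
    using card_Int_Diff[OF \<open>finite P\<close>, of K] card_Int_Diff[of K P]
    by (simp add: K_def Int_commute)
  moreover have "x i \<le> c" if "i \<in> P - K" for i
    using that P antimono[of "card P - 1" i] by (auto simp: K_def c_def)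
  moreover have "c \<le> x i" if "i \<in> K - P" for i
    using that \<open>card P \<le> n\<close> antimono[of i "card P - 1"] by (auto simp: K_def c_def)
  ultimately have "sum x (P - K) \<le> sum x (K - P)"
    using sum_bounded_above[of "P - K" x c] sum_bounded_below[of "K - P" c x] by simp
  then show ?thesis
    using sum.Int_Diff[OF \<open>finite P\<close>, of x K] sum.Int_Diff[of K x P]
    by (simp add: K_def Int_commute)
qed simp

lemma sum_abs_le_sum_largest_abs:
  fixes b :: "real ^ 'n::finite"
  shows "(\<Sum>j\<in>A. \<bar>b $ j\<bar>) \<le> sum_largest_abs b (card A)"
proof -
  obtain ys where ys: "distinct ys" "set ys = UNIV" "length ys = CARD('n)"
    and antimono: "\<And>i j. i \<le> j \<Longrightarrow> j < CARD('n) \<Longrightarrow> \<bar>b $ (ys ! j)\<bar> \<le> \<bar>b $ (ys ! i)\<bar>"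
    and prefix: "\<And>k. k \<le> CARD('n) \<Longrightarrow> sum_largest_abs b k = (\<Sum>j<k. \<bar>b $ (ys ! j)\<bar>)"
    by (rule sum_largest_abs_sorted_enumeration[of b]) blast
  define P where "P = {j. j < CARD('n) \<and> ys ! j \<in> A}"
  have AP: "A = nth ys ` P"
    using ys by (auto simp: P_def image_iff) (metis UNIV_I in_set_conv_nth)
  have inj: "inj_on (nth ys) P"
    using ys by (auto simp: P_def inj_on_def nth_eq_iff_index_eq)
  have card_P: "card P = card A"
    using AP inj by (simp add: card_image)
  have "(\<Sum>j\<in>A. \<bar>b $ j\<bar>) = (\<Sum>j\<in>P. \<bar>b $ (ys ! j)\<bar>)"
    using AP inj by (simp add: sum.reindex)
  also have "\<dots> \<le> (\<Sum>j<card P. \<bar>b $ (ys ! j)\<bar>)"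
    by (rule antimono_sum_subset_le_prefix[OF antimono]) (auto simp: P_def)
  also have "\<dots> = sum_largest_abs b (card A)"
    using prefix[of "card A"] card_mono[of UNIV A] card_P by simp
  finally show ?thesis .
qed

lemma sum_largest_abs_attained:
  fixes b :: "real ^ 'n::finite"
  assumes "k \<le> CARD('n)"
  obtains A where "card A = k" "sum_largest_abs b k = (\<Sum>j\<in>A. \<bar>b $ j\<bar>)"
proof -
  obtain ys where ys: "distinct ys" "set ys = UNIV" "length ys = CARD('n)"
    and "\<And>i j. i \<le> j \<Longrightarrow> j < CARD('n) \<Longrightarrow> \<bar>b $ (ys ! j)\<bar> \<le> \<bar>b $ (ys ! i)\<bar>"
    and prefix: "\<And>k. k \<le> CARD('n) \<Longrightarrow> sum_largest_abs b k = (\<Sum>j<k. \<bar>b $ (ys ! j)\<bar>)"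
    by (rule sum_largest_abs_sorted_enumeration[of b]) blast
  have "inj_on (nth ys) {..<k}"
    using ys assms by (auto simp: inj_on_def nth_eq_iff_index_eq)
  then show ?thesis
    using that[of "nth ys ` {..<k}"] prefix[OF assms] by (simp add: card_image sum.reindex)
qed

lemma sum_largest_abs_mono:
  fixes b b' :: "real ^ 'n::finite"
  assumes "\<And>j. \<bar>b $ j\<bar> \<le> \<bar>b' $ j\<bar>" and "k \<le> CARD('n)"
  shows "sum_largest_abs b k \<le> sum_largest_abs b' k"
proof -
  obtain A where A: "card A = k" "sum_largest_abs b k = (\<Sum>j\<in>A. \<bar>b $ j\<bar>)"
    using sum_largest_abs_attained[OF assms(2)] by blast
  have "(\<Sum>j\<in>A. \<bar>b $ j\<bar>) \<le> (\<Sum>j\<in>A. \<bar>b' $ j\<bar>)"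
    by (rule sum_mono) (rule assms(1))
  also have "\<dots> \<le> sum_largest_abs b' k"
    using sum_abs_le_sum_largest_abs[of b' A] A(1) by simp
  finally show ?thesis using A(2) by simp
qed

lemma sum_largest_abs_le_add_dist:
  fixes b b' :: "real ^ 'n::finite"
  assumes "k \<le> CARD('n)"
  shows "sum_largest_abs b k \<le> sum_largest_abs b' k + (\<Sum>j\<in>UNIV. \<bar>b $ j - b' $ j\<bar>)"
proof -
  obtain A where A: "card A = k" "sum_largest_abs b k = (\<Sum>j\<in>A. \<bar>b $ j\<bar>)"
    using sum_largest_abs_attained[OF assms] by blast
  have "(\<Sum>j\<in>A. \<bar>b $ j\<bar>) \<le> (\<Sum>j\<in>A. \<bar>b' $ j\<bar>) + (\<Sum>j\<in>A. \<bar>b $ j - b' $ j\<bar>)"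
    unfolding sum.distrib[symmetric] by (rule sum_mono) linarith
  also have "\<dots> \<le> sum_largest_abs b' k + (\<Sum>j\<in>UNIV. \<bar>b $ j - b' $ j\<bar>)"
    using sum_abs_le_sum_largest_abs[of b' A] A(1) by (intro add_mono sum_mono2) auto
  finally show ?thesis using A(2) by simp
qed

lemma sum_largest_abs_le_sum_abs:
  fixes b :: "real ^ 'n::finite"
  assumes "k \<le> CARD('n)"
  shows "sum_largest_abs b k \<le> (\<Sum>j\<in>UNIV. \<bar>b $ j\<bar>)"
proof -
  obtain A where "card A = k" "sum_largest_abs b k = (\<Sum>j\<in>A. \<bar>b $ j\<bar>)"
    using sum_largest_abs_attained[OF assms] by blast
  then show ?thesis by (simp add: sum_mono2)
qed

lemma sum_largest_abs_eq_sum_abs: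
  fixes b :: "real ^ 'n::finite"
  assumes "card {j. b $ j \<noteq> 0} \<le> k" and "k \<le> CARD('n)"
  shows "sum_largest_abs b k = (\<Sum>j\<in>UNIV. \<bar>b $ j\<bar>)"
proof -
  obtain A where "{j. b $ j \<noteq> 0} \<subseteq> A" "card A = k"
    using exists_subset_between[OF assms(1) _ subset_UNIV] assms(2) by auto
  then have "(\<Sum>j\<in>UNIV. \<bar>b $ j\<bar>) = (\<Sum>j\<in>A. \<bar>b $ j\<bar>)"
    by (intro sum.mono_neutral_right) auto
  also have "\<dots> \<le> sum_largest_abs b k"
    using sum_abs_le_sum_largest_abs[of b A] \<open>card A = k\<close> by simp
  finally show ?thesis
    using sum_largest_abs_le_sum_abs[OF assms(2), of b] by linarith
qed

lemma sum_largest_abs_le_add_small_coord: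
  fixes b b' :: "real ^ 'n::finite"
  assumes agree: "\<And>j. j \<noteq> i \<Longrightarrow> b $ j = b' $ j" and "b' $ i = 0"
    and small: "\<And>j. b' $ j \<noteq> 0 \<Longrightarrow> \<bar>b $ i\<bar> \<le> \<bar>b' $ j\<bar>"
    and k: "k \<le> card {j. b' $ j \<noteq> 0}"
  shows "sum_largest_abs b k \<le> sum_largest_abs b' k"
proof -
  define S where "S = {j. b' $ j \<noteq> 0}"
  have "k \<le> CARD('n)" using k card_mono[of UNIV S] by (simp add: S_def)
  then obtain A where A: "card A = k" "sum_largest_abs b k = (\<Sum>j\<in>A. \<bar>b $ j\<bar>)"
    using sum_largest_abs_attained by blast
  show ?thesis
  proof (cases "i \<in> A")
    case False
    then have "(\<Sum>j\<in>A. \<bar>b $ j\<bar>) = (\<Sum>j\<in>A. \<bar>b' $ j\<bar>)"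
      by (intro sum.cong refl) (metis agree False)
    then show ?thesis using A sum_abs_le_sum_largest_abs[of b' A] by simp
  next
    case True
    have "0 < card A" using True by (auto simp: card_gt_0_iff)
    then have "card (A - {i}) < card S"
      using True A(1) k by (simp add: S_def)
    then obtain j where "j \<in> S" "j \<notin> A - {i}"
      using card_mono[of "A - {i}" S] by (metis finite subsetI not_le)
    moreover have "j \<noteq> i" using \<open>j \<in> S\<close> \<open>b' $ i = 0\<close> by (auto simp: S_def)
    ultimately have "j \<notin> A" by blast
    have "(\<Sum>j\<in>A. \<bar>b $ j\<bar>) = \<bar>b $ i\<bar> + (\<Sum>j\<in>A - {i}. \<bar>b' $ j\<bar>)"
      using True agree by (simp add: sum.remove)
    also have "\<dots> \<le> \<bar>b' $ j\<bar> + (\<Sum>j\<in>A - {i}. \<bar>b' $ j\<bar>)"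
      using small \<open>j \<in> S\<close> by (simp add: S_def)
    also have "\<dots> = (\<Sum>j\<in>insert j (A - {i}). \<bar>b' $ j\<bar>)"
      using \<open>j \<notin> A\<close> by simp
    also have "\<dots> \<le> sum_largest_abs b' k"
      using sum_abs_le_sum_largest_abs[of b' "insert j (A - {i})"] True \<open>j \<notin> A\<close> A(1)
        \<open>0 < card A\<close>
      by simp
    finally show ?thesis using A(2) by simp
  qed
qed

lemma sum_by_parts_partial_sums:
  fixes a w :: "nat \<Rightarrow> 'a::comm_ring"
  shows "(\<Sum>k=1..n. a k * w k)
    = (\<Sum>k=1..n. (a k - a (Suc k)) * (\<Sum>j=1..k. w j)) + a (Suc n) * (\<Sum>j=1..n. w j)"
  by (induction n) (simp_all add: algebra_simps)

lemma weighted_sum_le_by_partial_sums: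
  fixes a w v :: "nat \<Rightarrow> real"
  assumes antimono: "\<And>i j. 1 \<le> i \<Longrightarrow> i \<le> j \<Longrightarrow> j \<le> n \<Longrightarrow> a j \<le> a i"
    and nonneg: "0 \<le> a n" and m: "1 \<le> m" "m \<le> n"
    and partial: "\<And>k. 1 \<le> k \<Longrightarrow> k \<le> n \<Longrightarrow>
      (\<Sum>j=1..k. w j) \<le> (\<Sum>j=1..k. v j) + (if m \<le> k then t else 0)"
  shows "(\<Sum>k=1..n. a k * w k) \<le> (\<Sum>k=1..n. a k * v k) + a m * t"
proof -
  define a' where "a' k = (if k \<le> n then a k else 0)" for k
  have gap_nonneg: "0 \<le> a' k - a' (Suc k)" if "1 \<le> k" for k
    using antimono[of k "Suc k"] antimono[of k n] nonneg that by (auto simp: a'_def)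
  have "(\<Sum>k=1..n. a k * w k) - (\<Sum>k=1..n. a k * v k) = (\<Sum>k=1..n. a' k * (w k - v k))"
    by (simp add: a'_def sum_subtractf right_diff_distrib)
  also have "\<dots> = (\<Sum>k=1..n. (a' k - a' (Suc k)) * (\<Sum>j=1..k. w j - v j))"
    using sum_by_parts_partial_sums[of a' "\<lambda>j. w j - v j" n] by (simp add: a'_def)
  also have "\<dots> \<le> (\<Sum>k=1..n. (a' k - a' (Suc k)) * (if m \<le> k then t else 0))"
    using partial gap_nonneg
    by (intro sum_mono mult_left_mono) (auto simp: sum_subtractf algebra_simps)
  also have "\<dots> = (\<Sum>k=m..n. a' k - a' (Suc k)) * t"
  proof -
    have "{k \<in> {1..n}. m \<le> k} = {m..n}" using m by auto
    then show ?thesis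
      by (simp add: sum_distrib_right sum.inter_filter[symmetric] if_distrib cong: if_cong)
  qed
  also have "(\<Sum>k=m..n. a' k - a' (Suc k)) = a m"
    using sum_Suc_diff[of m n "\<lambda>k. - a' k"] m by (simp add: a'_def)
  finally show ?thesis by simp
qed

lemma slope_pen_le_by_sum_largest_abs:
  fixes b b' :: "real ^ 'n::finite"
  assumes "\<And>i j. 1 \<le> i \<Longrightarrow> i \<le> j \<Longrightarrow> j \<le> CARD('n) \<Longrightarrow> lam j \<le> lam i"
    and "0 \<le> lam CARD('n)" and "1 \<le> m" "m \<le> CARD('n)"
    and "\<And>k. 1 \<le> k \<Longrightarrow> k \<le> CARD('n) \<Longrightarrow>
      sum_largest_abs b k \<le> sum_largest_abs b' k + (if m \<le> k then t else 0)"
  shows "slope_pen lam b \<le> slope_pen lam b' + lam m * t"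
  using weighted_sum_le_by_partial_sums[of "CARD('n)" lam m "ord_abs b" "ord_abs b'" t] assms
  unfolding slope_pen_def sum_largest_abs_def by simp

lemma directional_optimality:
  fixes f :: "'a::real_normed_vector \<Rightarrow> real"
  assumes deriv: "(f has_derivative f') (at x)" and "0 < t0"
    and le: "\<And>t. 0 < t \<Longrightarrow> t < t0 \<Longrightarrow> f x \<le> f (x + t *\<^sub>R h) + c * t"
  shows "0 \<le> f' h + c"
proof (rule ccontr)
  define \<phi> where "\<phi> t = f (x + t *\<^sub>R h) + c * t" for t
  have line: "((\<lambda>t. x + t *\<^sub>R h) has_derivative (\<lambda>t. t *\<^sub>R h)) (at 0)"
    by (auto intro!: derivative_eq_intros)
  have "((\<lambda>t. f (x + t *\<^sub>R h)) has_derivative (\<lambda>t. f' (t *\<^sub>R h))) (at 0)"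
    using has_derivative_compose[OF line, of f f'] deriv by simp
  then have \<phi>_deriv: "(\<phi> has_real_derivative f' h + c) (at 0)"
    unfolding \<phi>_def using linear_scale[OF has_derivative_linear[OF deriv]]
    by (auto intro!: derivative_eq_intros simp: has_field_derivative_def algebra_simps)
  assume "\<not> 0 \<le> f' h + c"
  then obtain d where "0 < d" and d: "\<And>s. 0 < s \<Longrightarrow> s < d \<Longrightarrow> \<phi> s < \<phi> 0"
    using DERIV_neg_dec_right[OF \<phi>_deriv] by auto
  define s where "s = min d t0 / 2"
  have "0 < s" "s < d" "s < t0" using \<open>0 < d\<close> \<open>0 < t0\<close> by (auto simp: s_def)
  then show False using d le unfolding \<phi>_def by fastforce
qed

lemma sgn_mult_le_abs: "sgn x * y \<le> \<bar>y\<bar>" for x y :: real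
  by (simp add: sgn_if abs_ge_self abs_ge_minus_self)

locale slope_minimizer =
  fixes l :: "real ^ 'n::finite \<Rightarrow> real" and g :: "real ^ 'n"
    and lam :: "nat \<Rightarrow> real" and bhat :: "real ^ 'n" and r :: nat
  assumes has_derivative: "(l has_derivative (\<lambda>h. g \<bullet> h)) (at bhat)"
    and lam_antimono: "\<And>i j. 1 \<le> i \<Longrightarrow> i \<le> j \<Longrightarrow> j \<le> CARD('n) \<Longrightarrow> lam j \<le> lam i"
    and lam_nonneg: "0 \<le> lam CARD('n)"
    and minimal: "\<And>b. l bhat + slope_pen lam bhat \<le> l b + slope_pen lam b"
    and support_card: "card {j. bhat $ j \<noteq> 0} = r"
begin

lemma directional_condition:
  assumes "0 < t0"
    and "\<And>t. 0 < t \<Longrightarrow> t < t0 \<Longrightarrow> slope_pen lam (bhat + t *\<^sub>R h) \<le> slope_pen lam bhat + c * t"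
  shows "0 \<le> g \<bullet> h + c"
proof (rule directional_optimality[OF has_derivative assms(1)])
  fix t :: real
  assume "0 < t" "t < t0"
  then show "l bhat \<le> l (bhat + t *\<^sub>R h) + c * t"
    using minimal[of "bhat + t *\<^sub>R h"] assms(2) by fastforce
qed

lemma gradient_on_support:
  assumes "bhat $ i \<noteq> 0"
  shows "lam r \<le> - sgn (bhat $ i) * g $ i"
proof -
  define h where "h = - sgn (bhat $ i) *\<^sub>R axis i (1::real)"
  have r: "1 \<le> r" "r \<le> CARD('n)"
    using support_card assms card_mono[of UNIV "{j. bhat $ j \<noteq> 0}"]
    by (auto simp: Suc_le_eq card_gt_0_iff)
  have "slope_pen lam (bhat + t *\<^sub>R h) \<le> slope_pen lam bhat + (- lam r) * t"
    if t: "0 < t" "t < \<bar>bhat $ i\<bar>" for t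
  proof -
    define b where "b = bhat + t *\<^sub>R h"
    have abs_b: "\<bar>b $ j\<bar> = \<bar>bhat $ j\<bar> - (if j = i then t else 0)" for j
      using t by (auto simp: b_def h_def axis_def sgn_if)
    have "sum_largest_abs b k \<le> sum_largest_abs bhat k + (if r \<le> k then - t else 0)"
      if k: "1 \<le> k" "k \<le> CARD('n)" for k
    proof (cases "r \<le> k")
      case True
      have "sum_largest_abs b k \<le> (\<Sum>j\<in>UNIV. \<bar>b $ j\<bar>)"
        by (rule sum_largest_abs_le_sum_abs[OF k(2)])
      also have "\<dots> = (\<Sum>j\<in>UNIV. \<bar>bhat $ j\<bar>) - t"
        by (simp add: abs_b sum_subtractf)
      also have "(\<Sum>j\<in>UNIV. \<bar>bhat $ j\<bar>) = sum_largest_abs bhat k"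
        using sum_largest_abs_eq_sum_abs[of bhat k] support_card True k by simp
      finally show ?thesis using True by simp
    next
      case False
      then show ?thesis
        using sum_largest_abs_mono[OF _ k(2), of b bhat] abs_b t by simp
    qed
    then show ?thesis
      using slope_pen_le_by_sum_largest_abs[of lam r b bhat "- t"] lam_antimono lam_nonneg r
      by (simp add: b_def)
  qed
  then have "0 \<le> g \<bullet> h + - lam r"
    using assms by (intro directional_condition[of "\<bar>bhat $ i\<bar>"]) auto
  then show ?thesis by (simp add: h_def inner_axis)
qed

lemma support_card_less:
  assumes "bhat $ i = 0"
  shows "r < CARD('n)"
  using support_card assms psubset_card_mono[of UNIV "{j. bhat $ j \<noteq> 0}"] by auto

lemma gradient_off_support:
  assumes "bhat $ i = 0"
  shows "\<bar>g $ i\<bar> \<le> lam (Suc r)"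
proof -
  \<comment> \<open>inserting 1 keeps the minimum defined when bhat = 0\<close>
  define t0 where "t0 = Min (insert 1 ((\<lambda>j. \<bar>bhat $ j\<bar>) ` {j. bhat $ j \<noteq> 0}))"
  have "0 < t0" by (auto simp: t0_def)
  have t0_le: "t0 \<le> \<bar>bhat $ j\<bar>" if "bhat $ j \<noteq> 0" for j
    using that by (auto simp: t0_def intro: Min_le)
  have "0 \<le> s * g $ i + lam (Suc r)" if s: "\<bar>s\<bar> = 1" for s
  proof -
    define h where "h = s *\<^sub>R axis i (1::real)"
    have "slope_pen lam (bhat + t *\<^sub>R h) \<le> slope_pen lam bhat + lam (Suc r) * t"
      if t: "0 < t" "t < t0" for t
    proof -
      define b where "b = bhat + t *\<^sub>R h"
      have agree: "b $ j = bhat $ j" if "j \<noteq> i" for j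
        using that by (simp add: b_def h_def axis_def)
      have abs_b_i: "\<bar>b $ i\<bar> = t"
        using assms s t by (simp add: b_def h_def abs_mult)
      have "\<bar>b $ j - bhat $ j\<bar> = (if j = i then t else 0)" for j
        using s t by (simp add: b_def h_def axis_def abs_mult)
      then have dist: "(\<Sum>j\<in>UNIV. \<bar>b $ j - bhat $ j\<bar>) = t"
        by simp
      have "sum_largest_abs b k \<le> sum_largest_abs bhat k + (if Suc r \<le> k then t else 0)"
        if k: "1 \<le> k" "k \<le> CARD('n)" for k
      proof (cases "Suc r \<le> k")
        case True
        then show ?thesis using sum_largest_abs_le_add_dist[OF k(2), of b bhat] dist by simp
      next
        case False
        have small: "\<bar>b $ i\<bar> \<le> \<bar>bhat $ j\<bar>" if "bhat $ j \<noteq> 0" for j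
          using t0_le[OF that] abs_b_i t by simp
        have "sum_largest_abs b k \<le> sum_largest_abs bhat k"
          using False support_card small assms
          by (intro sum_largest_abs_le_add_small_coord[of i b bhat]) (auto simp: agree)
        then show ?thesis using False by simp
      qed
      then show ?thesis
        using slope_pen_le_by_sum_largest_abs[of lam "Suc r" b bhat t] lam_antimono lam_nonneg
          support_card_less[OF assms]
        by (simp add: b_def)
    qed
    then have "0 \<le> g \<bullet> h + lam (Suc r)"
      by (intro directional_condition[OF \<open>0 < t0\<close>])
    then show ?thesis by (simp add: h_def inner_axis mult.commute)
  qed
  from this[of 1] this[of "- 1"] show ?thesis by (simp add: abs_le_iff)
qed

lemma abs_gradient_on_support:
  assumes "bhat $ i \<noteq> 0"
  shows "lam r \<le> \<bar>g $ i\<bar>"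
  using gradient_on_support[OF assms] sgn_mult_le_abs[of "bhat $ i" "- g $ i"] by simp

lemma shifted_gradient_on_support:
  assumes "bhat $ i \<noteq> 0" and "0 < a"
  shows "lam r < \<bar>(- g + a *\<^sub>R bhat) $ i\<bar>"
proof -
  have pos: "0 < a * \<bar>bhat $ i\<bar>" using assms by simp
  have "lam r + a * \<bar>bhat $ i\<bar> \<le> sgn (bhat $ i) * (- g + a *\<^sub>R bhat) $ i"
    using gradient_on_support[OF assms(1)] by (simp add: algebra_simps abs_sgn)
  also have "\<dots> \<le> \<bar>(- g + a *\<^sub>R bhat) $ i\<bar>"
    by (rule sgn_mult_le_abs)
  finally show ?thesis using pos by linarith
qed

lemma shifted_gradient_off_support:
  assumes "bhat $ i = 0" and "1 \<le> r"
  shows "\<bar>(- g + a *\<^sub>R bhat) $ i\<bar> \<le> lam r"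
  using gradient_off_support[OF assms(1)] support_card_less[OF assms(1)]
    lam_antimono[of r "Suc r"] assms
  by simp

end

theorem theorem3:
  fixes l :: "real ^ 'n \<Rightarrow> real"
    and g :: "real ^ 'n \<Rightarrow> real ^ 'n"
    and lam :: "nat \<Rightarrow> real"
    and bhat :: "real ^ 'n"
    and r :: nat
  assumes convex: "convex_on UNIV l"
    and grad: "\<And>b. (l has_derivative (\<lambda>h. g b \<bullet> h)) (at b)"
    and lam_mono: "\<And>i j. 1 \<le> i \<Longrightarrow> i \<le> j \<Longrightarrow> j \<le> CARD('n) \<Longrightarrow> lam j \<le> lam i"
    and lam_nonneg: "lam (CARD('n)) \<ge> 0"
    and argmin: "\<And>b. l bhat + slope_pen lam bhat \<le> l b + slope_pen lam b"
    and R: "card {i. bhat $ i \<noteq> 0} = r"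
    and r_pos: "r \<ge> 1"
  shows "(\<forall>a>0. \<forall>i. (bhat $ i \<noteq> 0 \<longleftrightarrow> \<bar>(- g bhat + a *\<^sub>R bhat) $ i\<bar> > lam r)
                      \<and> (bhat $ i \<noteq> 0 \<longrightarrow> \<bar>(- g bhat) $ i\<bar> \<ge> lam r))
       \<and> ((\<forall>i j. 1 \<le> i \<longrightarrow> i < j \<longrightarrow> j \<le> CARD('n) \<longrightarrow> lam j < lam i)
            \<longrightarrow> (\<forall>i. \<bar>(- g bhat) $ i\<bar> \<ge> lam r \<longrightarrow> bhat $ i \<noteq> 0))"
proof -
  interpret slope_minimizer l "g bhat" lam bhat r
    using grad lam_mono lam_nonneg argmin R by unfold_locales auto
  show ?thesis
  proof (intro conjI allI impI iffI)
    fix a :: real and i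
    assume "0 < a"
    show "lam r < \<bar>(- g bhat + a *\<^sub>R bhat) $ i\<bar>" if "bhat $ i \<noteq> 0"
      using shifted_gradient_on_support[OF that \<open>0 < a\<close>] .
    show "bhat $ i \<noteq> 0" if "lam r < \<bar>(- g bhat + a *\<^sub>R bhat) $ i\<bar>"
      using that shifted_gradient_off_support[of i a] r_pos by linarith
    show "lam r \<le> \<bar>(- g bhat) $ i\<bar>" if "bhat $ i \<noteq> 0"
      using abs_gradient_on_support[OF that] by simp
  next
    fix i
    assume strict: "\<forall>i j. 1 \<le> i \<longrightarrow> i < j \<longrightarrow> j \<le> CARD('n) \<longrightarrow> lam j < lam i"
      and "lam r \<le> \<bar>(- g bhat) $ i\<bar>"
    show "bhat $ i \<noteq> 0"
    proof
      assume "bhat $ i = 0"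
      then have "\<bar>(- g bhat) $ i\<bar> \<le> lam (Suc r)" "lam (Suc r) < lam r"
        using gradient_off_support[of i] support_card_less[of i] strict r_pos by auto
      with \<open>lam r \<le> \<bar>(- g bhat) $ i\<bar>\<close> show False by simp
    qed
  qed
qed

end
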